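(* Let $N\ge2$, $r\ge1$ and $c>0$. The set ${}^c\mathcal L^{N,r}_{\mathbf m,\mathbf p}$ of all matrices $\mathbf D\in\mathbb R^{m\times p}$ that can be written as $\mathbf D=\sum_{k=1}^r\mathbf D^k_1\otimes\cdots\otimes\mathbf D^k_N$ with $\mathbf D^k_n\in\mathbb R^{m_n\times p_n}$ and $\|\mathbf D^k_1\otimes\cdots\otimes\mathbf D^k_N\|_F\le c$ for every $k\in[r]$ is closed in $\mathbb R^{m\times p}$.
   Context: $m=\prod_{n=1}^N m_n$, $p=\prod_{n=1}^N p_n$; $\otimes$ denotes the Kronecker product and $\|\cdot\|_F$ the Frobenius norm. *)

theory Defs
  imports "HOL-Analysis.Analysis"
begin

text \<open>Real matrices are represented as functions on index pairs (0-based),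
  an m x p matrix being one that vanishes outside {0..<m} x {0..<p}.
  The space of such functions carries the product topology, which restricted to
  the (closed, finite-dimensional) subspace of m x p matrices is the Euclidean topology
  of R^(m x p).\<close>

type_synonym rmat = "nat \<times> nat \<Rightarrow> real"

definition mats :: "nat \<Rightarrow> nat \<Rightarrow> rmat set" where
  "mats m p = {A. \<forall>i j. (m \<le> i \<or> p \<le> j) \<longrightarrow> A (i, j) = 0}"

definition kron :: "nat \<Rightarrow> nat \<Rightarrow> rmat \<Rightarrow> rmat \<Rightarrow> rmat" where
  "kron c d A B = (\<lambda>(i, j). A (i div c, j div d) * B (i mod c, j mod d))"

fun kronN :: "(nat \<Rightarrow> nat) \<Rightarrow> (nat \<Rightarrow> nat) \<Rightarrow> (nat \<Rightarrow> rmat) \<Rightarrow> nat \<Rightarrow> rmat" where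
  "kronN m p D 0 = (\<lambda>(i, j). if i = 0 \<and> j = 0 then 1 else 0)"
| "kronN m p D (Suc n) = kron (m (Suc n)) (p (Suc n)) (kronN m p D n) (D (Suc n))"

definition frob :: "nat \<Rightarrow> nat \<Rightarrow> rmat \<Rightarrow> real" where
  "frob m p A = sqrt (\<Sum>i<m. \<Sum>j<p. (A (i, j))\<^sup>2)"

definition cL :: "real \<Rightarrow> nat \<Rightarrow> nat \<Rightarrow> (nat \<Rightarrow> nat) \<Rightarrow> (nat \<Rightarrow> nat) \<Rightarrow> rmat set" where
  "cL c N r m p =
    {D. \<exists>Dk :: nat \<Rightarrow> nat \<Rightarrow> rmat.
          (\<forall>k<r. \<forall>n\<in>{1..N}. Dk k n \<in> mats (m n) (p n)) \<and>
          (\<forall>k<r. frob (\<Prod>n=1..N. m n) (\<Prod>n=1..N. p n) (kronN m p (Dk k) N) \<le> c) \<and>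
          D = (\<lambda>ij. \<Sum>k<r. kronN m p (Dk k) N ij)}"

end

theory Submission
  imports Defs
begin

text \<open>The largest absolute entry of D_1 \<otimes> ... \<otimes> D_N is the product of the
  largest absolute entries of the factors, and it is bounded by the Frobenius norm. Rescaling the
  factors so that their largest absolute entries coincide leaves the product unchanged, so every
  admissible term has factors with entries in [-c^(1/N), c^(1/N)]. Hence the set is the continuous
  image of a compact set of factor families (a box intersected with the closed norm constraints),
  so it is compact and in particular closed.\<close>

lemma kron_mats:
  assumes A: "A \<in> mats M P" and B: "B \<in> mats c d"
  shows "kron c d A B \<in> mats (M * c) (P * d)"
  unfolding mats_def kron_def
proof (intro CollectI allI impI)
  fix i j :: nat assume outside: "M * c \<le> i \<or> P * d \<le> j"
  show "(case (i, j) of (i, j) \<Rightarrow> A (i div c, j div d) * B (i mod c, j mod d)) = 0"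
  proof (cases "c = 0 \<or> d = 0")
    case True
    then have "B (i mod c, j mod d) = 0" using B by (auto simp: mats_def)
    then show ?thesis by simp
  next
    case False
    then have "M \<le> i div c \<or> P \<le> j div d" using outside
      by (metis div_le_mono mult.commute nonzero_mult_div_cancel_left)
    then have "A (i div c, j div d) = 0" using A by (auto simp: mats_def)
    then show ?thesis by simp
  qed
qed

lemma kronN_mats:
  "\<forall>l\<in>{1..n}. D l \<in> mats (m l) (p l) \<Longrightarrow> kronN m p D n \<in> mats (\<Prod>l=1..n. m l) (\<Prod>l=1..n. p l)"
proof (induction n)
  case 0
  then show ?case by (auto simp: mats_def)
next
  case (Suc n)
  then have "kronN m p D (Suc n) \<in> mats ((\<Prod>l=1..n. m l) * m (Suc n)) ((\<Prod>l=1..n. p l) * p (Suc n))"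
    by (simp add: kron_mats)
  then show ?case by (simp add: prod.nat_ivl_Suc' mult.commute)
qed

lemma kronN_cong: "(\<And>l. l \<in> {1..n} \<Longrightarrow> D l = D' l) \<Longrightarrow> kronN m p D n = kronN m p D' n"
  by (induction n) auto

lemma kronN_eq_0_if_factor_eq_0:
  "l \<in> {1..n} \<Longrightarrow> D l = (\<lambda>_. 0) \<Longrightarrow> kronN m p D n = (\<lambda>_. 0)"
proof (induction n)
  case 0
  then show ?case by simp
next
  case (Suc n)
  then show ?case
    by (cases "l = Suc n") (auto simp: kron_def)
qed

lemma kronN_scale_factors:
  "kronN m p (\<lambda>l ij. a l * D l ij) n = (\<lambda>ij. (\<Prod>l=1..n. a l) * kronN m p D n ij)"
  by (induction n) (simp_all add: kron_def prod.nat_ivl_Suc' split_def fun_eq_iff algebra_simps)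

lemma index_mult_add_less: "i < I \<Longrightarrow> a < (M :: nat) \<Longrightarrow> i * M + a < I * M"
proof -
  assume "i < I" "a < M"
  then have "i * M + a < Suc i * M" by simp
  also have "\<dots> \<le> I * M" using \<open>i < I\<close> by (intro mult_le_mono1) simp
  finally show ?thesis .
qed

lemma kronN_abs_entry_eq_prod:
  assumes "\<forall>l\<in>{1..n}. \<exists>a<m l. \<exists>b<p l. \<bar>D l (a, b)\<bar> = \<mu> l"
  shows "\<exists>i<\<Prod>l=1..n. m l. \<exists>j<\<Prod>l=1..n. p l. \<bar>kronN m p D n (i, j)\<bar> = (\<Prod>l=1..n. \<mu> l)"
  using assms
proof (induction n)
  case 0
  then show ?case by auto
next
  case (Suc n)
  then obtain i j where ij: "i < (\<Prod>l=1..n. m l)" "j < (\<Prod>l=1..n. p l)"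
    "\<bar>kronN m p D n (i, j)\<bar> = (\<Prod>l=1..n. \<mu> l)"
    by auto
  obtain a b where ab: "a < m (Suc n)" "b < p (Suc n)" "\<bar>D (Suc n) (a, b)\<bar> = \<mu> (Suc n)"
    using Suc.prems by force
  have "\<bar>kronN m p D (Suc n) (i * m (Suc n) + a, j * p (Suc n) + b)\<bar> = (\<Prod>l=1..Suc n. \<mu> l)"
    using ij ab by (simp add: kron_def abs_mult prod.nat_ivl_Suc' mult.commute)
  moreover have "i * m (Suc n) + a < (\<Prod>l=1..Suc n. m l)" "j * p (Suc n) + b < (\<Prod>l=1..Suc n. p l)"
    using index_mult_add_less[OF ij(1) ab(1)] index_mult_add_less[OF ij(2) ab(2)]
    by (simp_all add: prod.nat_ivl_Suc')
  ultimately show ?case by blast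
qed

lemma abs_entry_le_frob:
  assumes "i < M" "j < P"
  shows "\<bar>A (i, j)\<bar> \<le> frob M P A"
proof -
  have "(A (i, j))\<^sup>2 \<le> (\<Sum>j'<P. (A (i, j'))\<^sup>2)"
    using assms by (intro member_le_sum) auto
  also have "\<dots> \<le> (\<Sum>i'<M. \<Sum>j'<P. (A (i', j'))\<^sup>2)"
    using assms by (intro member_le_sum[where f = "\<lambda>i'. \<Sum>j'<P. (A (i', j'))\<^sup>2"])
      (auto intro: sum_nonneg)
  finally show ?thesis unfolding frob_def using real_sqrt_abs real_sqrt_le_mono by metis
qed

lemma mats_max_abs_entry:
  assumes A: "A \<in> mats m p" and nonzero: "A \<noteq> (\<lambda>_. 0)"
  obtains \<mu> where "\<mu> > 0" "\<And>ij. \<bar>A ij\<bar> \<le> \<mu>" "\<exists>a<m. \<exists>b<p. \<bar>A (a, b)\<bar> = \<mu>"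
proof -
  have vanish: "A (i, j) = 0" if "\<not> (i < m \<and> j < p)" for i j
    using A that by (auto simp: mats_def)
  obtain i0 j0 where ij0: "A (i0, j0) \<noteq> 0" using nonzero by fastforce
  then have in0: "i0 < m" "j0 < p" using vanish by blast+
  let ?S = "(\<lambda>(i, j). \<bar>A (i, j)\<bar>) ` ({..<m} \<times> {..<p})"
  have fin: "finite ?S" by auto
  have le_Max: "\<bar>A (i, j)\<bar> \<le> Max ?S" for i j
  proof (cases "i < m \<and> j < p")
    case True
    then show ?thesis by (intro Max_ge[OF fin]) auto
  next
    case False
    have "\<bar>A (i0, j0)\<bar> \<le> Max ?S" using in0 by (intro Max_ge[OF fin]) auto
    then show ?thesis using vanish[OF False] by simp
  qed
  have "Max ?S \<in> ?S" using in0 by (intro Max_in[OF fin]) auto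
  then have "\<exists>a<m. \<exists>b<p. \<bar>A (a, b)\<bar> = Max ?S" by force
  moreover have "Max ?S > 0" using le_Max[of i0 j0] ij0 by linarith
  ultimately show ?thesis using that le_Max by auto
qed

text \<open>Replacing D_n by (t / \<mu>_n) D_n, where \<mu>_n is its largest absolute entry and
  t = (\<mu>_1 ... \<mu>_N)^(1/N), keeps the product; and \<mu>_1 ... \<mu>_N is the absolute value of an
  entry of the product, hence at most c.\<close>

lemma kronN_balanced_factors:
  assumes N: "N \<ge> 1" and c: "c \<ge> 0"
    and D: "\<forall>n\<in>{1..N}. D n \<in> mats (m n) (p n)"
    and frob_le: "frob (\<Prod>n=1..N. m n) (\<Prod>n=1..N. p n) (kronN m p D N) \<le> c"
  shows "\<exists>D'. (\<forall>n\<in>{1..N}. D' n \<in> mats (m n) (p n) \<and> (\<forall>ij. \<bar>D' n ij\<bar> \<le> root N c))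
           \<and> kronN m p D' N = kronN m p D N"
proof (cases "\<exists>n\<in>{1..N}. D n = (\<lambda>_. 0)")
  case True
  then have "kronN m p D N = (\<lambda>_. 0)" using kronN_eq_0_if_factor_eq_0 by blast
  moreover have "kronN m p (\<lambda>_ _. 0) N = (\<lambda>_. 0)" using kronN_eq_0_if_factor_eq_0[of 1 N] N by auto
  ultimately show ?thesis using c by (intro exI[of _ "\<lambda>_ _. 0"]) (auto simp: mats_def)
next
  case False
  have "\<exists>\<mu>. \<mu> > 0 \<and> (\<forall>ij. \<bar>D n ij\<bar> \<le> \<mu>) \<and> (\<exists>a<m n. \<exists>b<p n. \<bar>D n (a, b)\<bar> = \<mu>)"
    if n: "n \<in> {1..N}" for n
  proof -
    have "D n \<in> mats (m n) (p n)" "D n \<noteq> (\<lambda>_. 0)" using D False n by auto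
    then show ?thesis by (elim mats_max_abs_entry) auto
  qed
  then obtain \<mu> where \<mu>: "\<And>n. n \<in> {1..N} \<Longrightarrow>
      \<mu> n > 0 \<and> (\<forall>ij. \<bar>D n ij\<bar> \<le> \<mu> n) \<and> (\<exists>a<m n. \<exists>b<p n. \<bar>D n (a, b)\<bar> = \<mu> n)"
    by metis
  then have \<mu>_pos: "\<And>n. n \<in> {1..N} \<Longrightarrow> \<mu> n > 0"
    and \<mu>_ge: "\<And>n ij. n \<in> {1..N} \<Longrightarrow> \<bar>D n ij\<bar> \<le> \<mu> n"
    and \<mu>_attained: "\<forall>n\<in>{1..N}. \<exists>a<m n. \<exists>b<p n. \<bar>D n (a, b)\<bar> = \<mu> n"
    by blast+
  define P where "P = (\<Prod>n=1..N. \<mu> n)"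
  have P_pos: "P > 0" unfolding P_def using \<mu>_pos by (intro prod_pos) auto
  obtain i j where "i < (\<Prod>n=1..N. m n)" "j < (\<Prod>n=1..N. p n)" "\<bar>kronN m p D N (i, j)\<bar> = P"
    using kronN_abs_entry_eq_prod[OF \<mu>_attained] unfolding P_def by blast
  then have "P \<le> c" using abs_entry_le_frob[of i _ j _ "kronN m p D N"] frob_le by fastforce
  define t where "t = root N P"
  have t_pos: "t > 0" and t_le: "t \<le> root N c"
    unfolding t_def using P_pos \<open>P \<le> c\<close> N by simp_all
  define D' where "D' = (\<lambda>n ij. t / \<mu> n * D n ij)"
  have "(\<Prod>n=1..N. t / \<mu> n) = t ^ N / P" unfolding P_def by (simp add: prod_dividef)
  also have "t ^ N = P" unfolding t_def using N P_pos by (simp add: real_root_pow_pos2)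
  finally have "kronN m p D' N = kronN m p D N"
    unfolding D'_def kronN_scale_factors using P_pos by simp
  moreover have "\<bar>D' n ij\<bar> \<le> root N c" if n: "n \<in> {1..N}" for n ij
  proof -
    have "\<bar>D' n ij\<bar> = t / \<mu> n * \<bar>D n ij\<bar>"
      unfolding D'_def using t_pos \<mu>_pos[OF n] by (simp add: abs_mult)
    also have "\<dots> \<le> t / \<mu> n * \<mu> n" using \<mu>_ge[OF n] \<mu>_pos[OF n] t_pos by (intro mult_left_mono) auto
    finally show ?thesis using t_le \<mu>_pos[OF n] by simp
  qed
  moreover have "D' n \<in> mats (m n) (p n)" if "n \<in> {1..N}" for n
    using D that unfolding D'_def mats_def by auto
  ultimately show ?thesis by blast
qed

text \<open>A family of factor matrices D^k_n is encoded as the single point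
  F (k, n, i, j) = D^k_n (i, j) of the product space of all functions nat^4 \<Rightarrow> real.\<close>

definition factors_of :: "(nat \<times> nat \<times> nat \<times> nat \<Rightarrow> real) \<Rightarrow> nat \<Rightarrow> nat \<Rightarrow> rmat" where
  "factors_of F = (\<lambda>k n (i, j). F (k, n, i, j))"

lemma factors_of_apply [simp]: "factors_of F k n (i, j) = F (k, n, i, j)"
  by (simp add: factors_of_def)

definition sum_kron_factors ::
    "nat \<Rightarrow> nat \<Rightarrow> (nat \<Rightarrow> nat) \<Rightarrow> (nat \<Rightarrow> nat) \<Rightarrow> (nat \<times> nat \<times> nat \<times> nat \<Rightarrow> real) \<Rightarrow> rmat" where
  "sum_kron_factors r N m p F = (\<lambda>ij. \<Sum>k<r. kronN m p (factors_of F k) N ij)"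

definition factor_box ::
    "nat \<Rightarrow> nat \<Rightarrow> (nat \<Rightarrow> nat) \<Rightarrow> (nat \<Rightarrow> nat) \<Rightarrow> real \<Rightarrow> (nat \<times> nat \<times> nat \<times> nat \<Rightarrow> real) set" where
  "factor_box r N m p B = Pi\<^sub>E UNIV (\<lambda>(k, n, i, j).
     if k < r \<and> n \<in> {1..N} \<and> i < m n \<and> j < p n then {-B..B} else {0})"

lemma mem_factor_box_iff:
  "F \<in> factor_box r N m p B \<longleftrightarrow>
     (\<forall>k n i j. if k < r \<and> n \<in> {1..N} \<and> i < m n \<and> j < p n then F (k, n, i, j) \<in> {-B..B}
                else F (k, n, i, j) = 0)"
  unfolding factor_box_def PiE_UNIV_domain Pi_iff by simp

lemma factors_of_mats:
  assumes "F \<in> factor_box r N m p B" "k < r" "n \<in> {1..N}"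
  shows "factors_of F k n \<in> mats (m n) (p n)"
  using assms by (auto simp: mats_def factors_of_def mem_factor_box_iff)

lemma compact_PiE_UNIV:
  fixes S :: "'a \<Rightarrow> 'b::topological_space set"
  assumes "\<And>x. compact (S x)"
  shows "compact (Pi\<^sub>E UNIV S)"
proof -
  have "compactin (product_topology (\<lambda>_. euclidean) UNIV) (Pi\<^sub>E UNIV S)"
    using assms by (simp add: compactin_PiE)
  then show ?thesis by (simp add: euclidean_product_topology)
qed

lemma compact_factor_box: "compact (factor_box r N m p B)"
  unfolding factor_box_def by (intro compact_PiE_UNIV) (auto split: prod.split)

lemma continuous_on_kronN_factors_of:
  "continuous_on UNIV (\<lambda>F. kronN m p (factors_of F k) n ij)"
proof (induction n arbitrary: ij)
  case 0
  then show ?case by simp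
next
  case (Suc n)
  obtain i j where ij: "ij = (i, j)" by (cases ij)
  have "continuous_on UNIV (\<lambda>F. kronN m p (factors_of F k) n (i div m (Suc n), j div p (Suc n))
          * F (k, Suc n, i mod m (Suc n), j mod p (Suc n)))"
    by (intro continuous_on_mult Suc continuous_on_product_coordinates)
  then show ?case by (simp add: ij kron_def)
qed

lemma continuous_on_sum_kron_factors: "continuous_on UNIV (sum_kron_factors r N m p)"
  unfolding sum_kron_factors_def
  by (intro continuous_on_coordinatewise_then_product continuous_on_sum continuous_on_kronN_factors_of)

lemma closed_frob_kronN_factors_le:
  "closed {F. \<forall>k<r. frob M P (kronN m p (factors_of F k) N) \<le> c}"
proof -
  have "closed {F. frob M P (kronN m p (factors_of F k) N) \<le> c}" for k
    unfolding frob_def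
    by (intro closed_Collect_le continuous_intros continuous_on_kronN_factors_of)
  then have "closed (\<Inter>k<r. {F. frob M P (kronN m p (factors_of F k) N) \<le> c})" by blast
  moreover have "{F. \<forall>k<r. frob M P (kronN m p (factors_of F k) N) \<le> c}
      = (\<Inter>k<r. {F. frob M P (kronN m p (factors_of F k) N) \<le> c})" by blast
  ultimately show ?thesis by simp
qed

lemma sum_kron_factors_image_subset_cL:
  "sum_kron_factors r N m p ` (factor_box r N m p B \<inter>
       {F. \<forall>k<r. frob (\<Prod>n=1..N. m n) (\<Prod>n=1..N. p n) (kronN m p (factors_of F k) N) \<le> c})
     \<subseteq> cL c N r m p"
  unfolding cL_def sum_kron_factors_def using factors_of_mats by blast

lemma cL_subset_sum_kron_factors_image:
  assumes "N \<ge> 1" "c \<ge> 0"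
  shows "cL c N r m p \<subseteq> sum_kron_factors r N m p ` (factor_box r N m p (root N c) \<inter>
       {F. \<forall>k<r. frob (\<Prod>n=1..N. m n) (\<Prod>n=1..N. p n) (kronN m p (factors_of F k) N) \<le> c})"
proof
  fix D assume "D \<in> cL c N r m p"
  then obtain Dk where Dk: "\<forall>k<r. \<forall>n\<in>{1..N}. Dk k n \<in> mats (m n) (p n)"
    and frob_le: "\<forall>k<r. frob (\<Prod>n=1..N. m n) (\<Prod>n=1..N. p n) (kronN m p (Dk k) N) \<le> c"
    and D: "D = (\<lambda>ij. \<Sum>k<r. kronN m p (Dk k) N ij)"
    unfolding cL_def by blast
  have "\<forall>k<r. \<exists>E. (\<forall>n\<in>{1..N}. E n \<in> mats (m n) (p n) \<and> (\<forall>ij. \<bar>E n ij\<bar> \<le> root N c))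
      \<and> kronN m p E N = kronN m p (Dk k) N"
    using kronN_balanced_factors Dk frob_le assms by blast
  then obtain E where E_mats: "\<And>k n. k < r \<Longrightarrow> n \<in> {1..N} \<Longrightarrow> E k n \<in> mats (m n) (p n)"
    and E_bound: "\<And>k n ij. k < r \<Longrightarrow> n \<in> {1..N} \<Longrightarrow> \<bar>E k n ij\<bar> \<le> root N c"
    and E_kronN: "\<And>k. k < r \<Longrightarrow> kronN m p (E k) N = kronN m p (Dk k) N"
    by metis
  define F where "F = (\<lambda>(k, n, i, j). if k < r \<and> n \<in> {1..N} then E k n (i, j) else 0)"
  have kronN_F: "kronN m p (factors_of F k) N = kronN m p (Dk k) N" if "k < r" for k
    using E_kronN[OF that] kronN_cong[of N "factors_of F k" "E k" m p]
    by (simp add: factors_of_def F_def that)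
  have "F \<in> factor_box r N m p (root N c)"
    unfolding mem_factor_box_iff
  proof (intro allI)
    fix k n i j
    show "if k < r \<and> n \<in> {1..N} \<and> i < m n \<and> j < p n
      then F (k, n, i, j) \<in> {- root N c..root N c} else F (k, n, i, j) = 0"
      using E_mats[of k n] E_bound[of k n "(i, j)"] by (auto simp: F_def mats_def abs_le_iff)
  qed
  moreover have "D = sum_kron_factors r N m p F"
    unfolding D sum_kron_factors_def by (simp add: kronN_F)
  ultimately show "D \<in> sum_kron_factors r N m p ` (factor_box r N m p (root N c) \<inter>
       {F. \<forall>k<r. frob (\<Prod>n=1..N. m n) (\<Prod>n=1..N. p n) (kronN m p (factors_of F k) N) \<le> c})"
    using frob_le kronN_F by auto
qed

lemma compact_cL:
  assumes "N \<ge> 1" "c \<ge> 0"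
  shows "compact (cL c N r m p)"
proof -
  let ?C = "{F. \<forall>k<r. frob (\<Prod>n=1..N. m n) (\<Prod>n=1..N. p n) (kronN m p (factors_of F k) N) \<le> c}"
  have "cL c N r m p = sum_kron_factors r N m p ` (factor_box r N m p (root N c) \<inter> ?C)"
    using sum_kron_factors_image_subset_cL cL_subset_sum_kron_factors_image[OF assms] by (rule antisym[rotated])
  moreover have "compact (sum_kron_factors r N m p ` (factor_box r N m p (root N c) \<inter> ?C))"
    by (intro compact_continuous_image continuous_on_subset[OF continuous_on_sum_kron_factors]
        compact_Int_closed compact_factor_box closed_frob_kronN_factors_le subset_UNIV)
  ultimately show ?thesis by simp
qed

lemma cL_subset_mats: "cL c N r m p \<subseteq> mats (\<Prod>n=1..N. m n) (\<Prod>n=1..N. p n)"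
proof
  fix D assume "D \<in> cL c N r m p"
  then obtain Dk where Dk: "\<forall>k<r. \<forall>n\<in>{1..N}. Dk k n \<in> mats (m n) (p n)"
    and D: "D = (\<lambda>ij. \<Sum>k<r. kronN m p (Dk k) N ij)"
    unfolding cL_def by blast
  have "\<forall>k<r. kronN m p (Dk k) N \<in> mats (\<Prod>n=1..N. m n) (\<Prod>n=1..N. p n)"
    using Dk kronN_mats by blast
  then show "D \<in> mats (\<Prod>n=1..N. m n) (\<Prod>n=1..N. p n)"
    unfolding D mats_def by auto
qed

theorem corollary1:
  fixes N r :: nat and c :: real and m p :: "nat \<Rightarrow> nat"
  assumes "N \<ge> 2" and "r \<ge> 1" and "c > 0"
  shows "cL c N r m p \<subseteq> mats (\<Prod>n=1..N. m n) (\<Prod>n=1..N. p n) \<and> closed (cL c N r m p)"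
  using cL_subset_mats compact_cL assms by (simp add: compact_imp_closed)

end
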